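(* Let $n\ge 2$, let $A_1,\dots,A_n$ be pairwise distinct points in the plane and let $\Gamma$ be a circle with centre $O$. Suppose that for every $r>0$ the quantity $\sum_{i=1}^n|PA_i|^{2n-2}$ is constant as $P$ ranges over the circle $\Gamma_r$ of radius $r$ centred at $O$ (the constant may depend on $r$). Then $A_1,\dots,A_n$ are the vertices of a regular $n$-gon inscribed in a circle centred at $O$.
   Context: $|PA|$ denotes Euclidean distance. For $n=2$ a "regular $2$-gon inscribed in a circle centred at $O$" means two distinct points symmetric with respect to $O$. *)

theory Defs
  imports Complex_Main
begin

text \<open>Points of the plane are modelled as complex numbers; the distance |PA| is cmod (P - A).\<close>

definition regular_ngon_centred :: "nat \<Rightarrow> (nat \<Rightarrow> complex) \<Rightarrow> complex \<Rightarrow> bool" where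
  "regular_ngon_centred n A C \<longleftrightarrow>
     (\<exists>R::real. R > 0 \<and> (\<exists>th::real.
        A ` {..<n} = {C + complex_of_real R * cis (th + 2 * pi * real k / real n) | k. k < n}))"

end

theory Submission
  imports Defs "HOL-Computational_Algebra.Polynomial"
begin

text \<open>
  Let the points be A 0, ..., A (n-1) and put a i = A i - C, m = n - 1.  The proof has an
  analytic and an algebraic half.

  Analytic half: on the circle |z| = r one has z |z - a|^2 = (z - a)(r^2 - conj a z), so the
  hypothesis that the sum of |z - a i|^(2m) is constant on every such circle becomes a
  polynomial identity in z, valid for all z, and then (with s = r^2) a polynomial identity in
  s.  Comparing the coefficients of s^m gives sum (z - a i)^m = K z^m for all z, and
  comparing coefficients in z shows that the power sums of the a i of exponents 1, ..., n-1
  vanish.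

  Algebraic half: if n distinct numbers have vanishing power sums of exponents 1, ..., n-1,
  they are the roots of X^n - c (a Newton-identity argument with Q = prod (X - a i)).  Since
  the a i are distinct, c is nonzero and the a i are exactly the n-th roots of c, i.e. the
  vertices of a regular n-gon centred at 0.
\<close>

lemma poly_eq_0_if_infinite_roots:
  fixes p :: "'a::idom poly"
  assumes "infinite S" and "\<forall>x\<in>S. poly p x = 0"
  shows "p = 0"
  using assms poly_roots_finite[of p] finite_subset[of S "{x. poly p x = 0}"] by blast

lemma poly_eq_0_if_many_roots:
  fixes p :: "'a::idom poly"
  assumes "inj_on a {..<n}" and "\<forall>j<n. poly p (a j) = 0" and "degree p < n"
  shows "p = 0"
proof (rule ccontr)
  assume "p \<noteq> 0"
  have "a ` {..<n} \<subseteq> {x. poly p x = 0}" using assms(2) by auto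
  then have "card (a ` {..<n}) \<le> card {x. poly p x = 0}"
    using poly_roots_finite[OF \<open>p \<noteq> 0\<close>] by (rule card_mono[rotated])
  also have "\<dots> \<le> degree p" using card_poly_roots_bound[OF \<open>p \<noteq> 0\<close>] .
  finally show False using card_image[OF assms(1)] assms(3) by simp
qed

lemma infinite_circle:
  assumes "r > 0"
  shows "infinite {z::complex. cmod z = r}"
proof
  assume fin: "finite {z::complex. cmod z = r}"
  define f where "f x = Complex x (sqrt (r\<^sup>2 - x\<^sup>2))" for x
  have "f ` {-r<..<r} \<subseteq> {z. cmod z = r}"
  proof
    fix z assume "z \<in> f ` {-r<..<r}"
    then obtain x where x: "-r < x" "x < r" "z = f x" by auto
    then have "x\<^sup>2 \<le> r\<^sup>2" by (simp add: abs_le_square_iff[symmetric] abs_less_iff less_imp_le)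
    then show "z \<in> {z. cmod z = r}" using assms by (simp add: x f_def cmod_def)
  qed
  moreover have "inj_on f {-r<..<r}" unfolding inj_on_def f_def by simp
  then have "infinite (f ` {-r<..<r})" using assms by (simp add: finite_image_iff)
  ultimately show False using fin finite_subset by blast
qed

lemma circle_factorisation:
  fixes z a :: complex
  assumes "cmod z = r"
  shows "z * of_real ((cmod (z - a))\<^sup>2) = (z - a) * (of_real (r\<^sup>2) - cnj a * z)"
proof -
  have on_circle: "z * cnj z = of_real (r\<^sup>2)"
    using complex_norm_square[of z] assms by simp
  have "z * of_real ((cmod (z - a))\<^sup>2) = z * ((z - a) * cnj (z - a))"
    by (simp only: complex_norm_square)
  also have "\<dots> = (z - a) * (z * cnj z - cnj a * z)"
    by (simp add: algebra_simps)
  finally show ?thesis by (simp only: on_circle)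
qed

text \<open>If the sum of the (2m)-th powers of the distances to the points a i is constant on
  the circle |w| = r, then the polynomial identity obtained from the factorisation above holds
  on the circle and therefore, by the identity principle, for every complex z.\<close>

lemma circle_sum_identity:
  fixes a :: "'b \<Rightarrow> complex"
  assumes "r > 0" and const: "\<forall>w. cmod w = r \<longrightarrow> (\<Sum>i\<in>I. cmod (w - a i) ^ (2 * m)) = c"
  shows "(\<Sum>i\<in>I. (z - a i) ^ m * (of_real (r\<^sup>2) - cnj (a i) * z) ^ m) = of_real c * z ^ m"
proof -
  define p where "p = (\<Sum>i\<in>I. [:- a i, 1:] ^ m * [:of_real (r\<^sup>2), - cnj (a i):] ^ m) - monom (of_real c) m"
  have p_eval: "poly p w = (\<Sum>i\<in>I. (w - a i) ^ m * (of_real (r\<^sup>2) - cnj (a i) * w) ^ m) - of_real c * w ^ m" for w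
    by (simp add: p_def poly_sum poly_monom algebra_simps)
  have "poly p w = 0" if "cmod w = r" for w
  proof -
    have "(\<Sum>i\<in>I. (w - a i) ^ m * (of_real (r\<^sup>2) - cnj (a i) * w) ^ m)
          = (\<Sum>i\<in>I. (w * of_real ((cmod (w - a i))\<^sup>2)) ^ m)"
      by (simp only: circle_factorisation[OF that] power_mult_distrib)
    also have "\<dots> = (\<Sum>i\<in>I. w ^ m * of_real (cmod (w - a i) ^ (2 * m)))"
      by (simp only: power_mult_distrib power_mult of_real_power)
    also have "\<dots> = w ^ m * of_real (\<Sum>i\<in>I. cmod (w - a i) ^ (2 * m))"
      by (simp only: sum_distrib_left of_real_sum)
    also have "\<dots> = of_real c * w ^ m"
      using const that by simp
    finally show ?thesis by (simp add: p_eval)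
  qed
  then have "p = 0"
    using infinite_circle[OF assms(1)] by (intro poly_eq_0_if_infinite_roots) auto
  then show ?thesis using p_eval[of z] by simp
qed

lemma circle_sum_homogeneity:
  fixes a :: "'b \<Rightarrow> complex"
  assumes "r > 0" and "\<forall>w. cmod w = r \<longrightarrow> (\<Sum>i\<in>I. cmod (w - a i) ^ (2 * m)) = c"
  shows "(\<Sum>i\<in>I. (z - a i) ^ m * (of_real (r\<^sup>2) - cnj (a i) * z) ^ m)
       = (\<Sum>i\<in>I. (z ^ m * (1 - a i) ^ m) * (of_real (r\<^sup>2) - cnj (a i)) ^ m)"
proof -
  note identity = circle_sum_identity[OF assms]
  have "(\<Sum>i\<in>I. (z ^ m * (1 - a i) ^ m) * (of_real (r\<^sup>2) - cnj (a i)) ^ m)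
        = z ^ m * (\<Sum>i\<in>I. (1 - a i) ^ m * (of_real (r\<^sup>2) - cnj (a i) * 1) ^ m)"
    by (simp add: sum_distrib_left mult.assoc)
  also have "\<dots> = z ^ m * (of_real c * 1 ^ m)" by (simp only: identity)
  also have "\<dots> = of_real c * z ^ m" by simp
  also have "\<dots> = (\<Sum>i\<in>I. (z - a i) ^ m * (of_real (r\<^sup>2) - cnj (a i) * z) ^ m)"
    by (rule identity[symmetric])
  finally show ?thesis by (rule sym)
qed

text \<open>Comparison of the leading coefficients of two polynomials in s of the form
  sum of u i (s - v i)^m that agree on an infinite set.\<close>

lemma sum_coeffs_eq_if_power_sums_agree:
  fixes u v u' v' :: "'b \<Rightarrow> 'a::idom"
  assumes "infinite S"
    and "\<forall>s\<in>S. (\<Sum>i\<in>I. u i * (s - v i) ^ m) = (\<Sum>i\<in>I. u' i * (s - v' i) ^ m)"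
  shows "(\<Sum>i\<in>I. u i) = (\<Sum>i\<in>I. u' i)"
proof -
  define p where "p = (\<Sum>i\<in>I. smult (u i) ([:- v i, 1:] ^ m))
                    - (\<Sum>i\<in>I. smult (u' i) ([:- v' i, 1:] ^ m))"
  have "p = 0"
    using assms by (intro poly_eq_0_if_infinite_roots) (auto simp: p_def poly_sum)
  then have "coeff p m = 0" by simp
  then show ?thesis by (simp add: p_def coeff_sum coeff_linear_power)
qed

lemma coeff_linear_power_complement:
  fixes a :: "'a::comm_ring_1"
  assumes "j \<le> m"
  shows "coeff ([:- a, 1:] ^ m) (m - j) = of_nat (m choose j) * (- 1) ^ j * a ^ j"
proof -
  have "m choose (m - j) = m choose j" and "m - (m - j) = j"
    using assms binomial_symmetric[of j m] by simp_all
  moreover have "coeff ([:- a, 1:] ^ m) (m - j) = of_nat (m choose (m - j)) * 1 ^ (m - j) * (- a) ^ (m - (m - j))"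
    by (rule coeff_linear_poly_power) simp
  ultimately show ?thesis by (simp add: power_minus[of a])
qed

lemma power_sums_vanish_if_shift_identity:
  fixes a :: "'b \<Rightarrow> 'a::{idom,ring_char_0}"
  assumes "\<forall>z. (\<Sum>i\<in>I. (z - a i) ^ m) = K * z ^ m" and "1 \<le> j" and "j \<le> m"
  shows "(\<Sum>i\<in>I. a i ^ j) = 0"
proof -
  have "poly (\<Sum>i\<in>I. [:- a i, 1:] ^ m) = poly (monom K m)"
    using assms(1) by (simp add: poly_sum poly_monom fun_eq_iff mult.commute)
  then have "coeff (\<Sum>i\<in>I. [:- a i, 1:] ^ m) (m - j) = coeff (monom K m) (m - j)"
    by (simp only: poly_eq_poly_eq_iff)
  then have "of_nat (m choose j) * (- 1) ^ j * (\<Sum>i\<in>I. a i ^ j) = 0"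
    using assms(2,3) by (simp add: coeff_sum coeff_linear_power_complement sum_distrib_left)
  then show ?thesis using assms(3) by simp
qed

text \<open>For fixed z, both sides of
  circle_sum_homogeneity are polynomials in s = r^2 that agree for all s > 0; comparing
  their leading coefficients gives sum (z - a i)^m = z^m * sum (1 - a i)^m.\<close>

lemma power_sums_vanish_if_circle_sums_constant:
  fixes a :: "'b \<Rightarrow> complex"
  assumes const: "\<forall>r>0. \<exists>c. \<forall>w. cmod w = r \<longrightarrow> (\<Sum>i\<in>I. cmod (w - a i) ^ (2 * m)) = c"
    and "1 \<le> j" and "j \<le> m"
  shows "(\<Sum>i\<in>I. a i ^ j) = 0"
proof -
  have "\<forall>z. (\<Sum>i\<in>I. (z - a i) ^ m) = (\<Sum>i\<in>I. (1 - a i) ^ m) * z ^ m"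
  proof
    fix z :: complex
    have "\<forall>s\<in>of_real ` {0<..}. (\<Sum>i\<in>I. (z - a i) ^ m * (s - cnj (a i) * z) ^ m)
          = (\<Sum>i\<in>I. (z ^ m * (1 - a i) ^ m) * (s - cnj (a i)) ^ m)"
    proof
      fix s :: complex assume "s \<in> of_real ` {0<..}"
      then obtain t :: real where "t > 0" and "s = of_real ((sqrt t)\<^sup>2)" by auto
      moreover obtain c where "\<forall>w. cmod w = sqrt t \<longrightarrow> (\<Sum>i\<in>I. cmod (w - a i) ^ (2 * m)) = c"
        using const \<open>t > 0\<close> by (meson real_sqrt_gt_zero)
      ultimately show "(\<Sum>i\<in>I. (z - a i) ^ m * (s - cnj (a i) * z) ^ m)
          = (\<Sum>i\<in>I. (z ^ m * (1 - a i) ^ m) * (s - cnj (a i)) ^ m)"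
        using circle_sum_homogeneity[OF real_sqrt_gt_zero] by blast
    qed
    moreover have "infinite (of_real ` {0::real<..} :: complex set)"
      by (simp add: finite_image_iff inj_on_def infinite_Ioi)
    ultimately have "(\<Sum>i\<in>I. (z - a i) ^ m) = (\<Sum>i\<in>I. z ^ m * (1 - a i) ^ m)"
      by (rule sum_coeffs_eq_if_power_sums_agree[rotated])
    then show "(\<Sum>i\<in>I. (z - a i) ^ m) = (\<Sum>i\<in>I. (1 - a i) ^ m) * z ^ m"
      by (simp only: sum_distrib_left sum_distrib_right mult.commute)
  qed
  then show ?thesis using assms(2,3) by (rule power_sums_vanish_if_shift_identity)
qed

lemma sum_poly_eq_of_nat_mult_poly_0:
  fixes a :: "nat \<Rightarrow> 'a::comm_ring_1"
  assumes power_sums: "\<And>k. 1 \<le> k \<Longrightarrow> k < n \<Longrightarrow> (\<Sum>i<n. a i ^ k) = 0"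
    and "degree f < n"
  shows "(\<Sum>i<n. poly f (a i)) = of_nat n * poly f 0"
proof -
  have "(\<Sum>i<n. poly f (a i)) = (\<Sum>k\<le>degree f. coeff f k * (\<Sum>i<n. a i ^ k))"
    by (simp add: poly_altdef sum_distrib_left sum.swap[of _ "{..<n}"])
  also have "\<dots> = (\<Sum>k\<in>{0}. coeff f k * (\<Sum>i<n. a i ^ k))"
    using assms(2) by (intro sum.mono_neutral_right) (auto simp: power_sums)
  finally show ?thesis by (simp add: poly_0_coeff_0)
qed

text \<open>For Q the monic polynomial with roots a 0, ..., a (n-1) this averaging property, applied
  to Q/(X - a j), yields  a j * Q'(a j) = -n Q(0).\<close>

lemma pderiv_prod_linear_at_root:
  fixes a :: "nat \<Rightarrow> 'a::idom"
  assumes power_sums: "\<And>k. 1 \<le> k \<Longrightarrow> k < n \<Longrightarrow> (\<Sum>i<n. a i ^ k) = 0"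
    and j: "j < n"
  defines "Q \<equiv> \<Prod>i<n. [:- a i, 1:]"
  shows "a j * poly (pderiv Q) (a j) = - of_nat n * poly Q 0"
proof -
  define L where "L = (\<Prod>i\<in>{..<n} - {j}. [:- a i, 1:])"
  have Q_split: "Q = [:- a j, 1:] * L"
    unfolding Q_def L_def using j by (simp add: prod.remove)
  have "degree L \<le> (\<Sum>i\<in>{..<n} - {j}. degree [:- a i, 1:])"
    unfolding L_def by (rule degree_prod_sum_le[unfolded comp_def]) simp
  also have "\<dots> < n" using j by simp
  finally have "degree L < n" .
  have "(\<Sum>i<n. poly L (a i)) = poly L (a j) + (\<Sum>i\<in>{..<n} - {j}. poly L (a i))"
    using j by (simp add: sum.remove)
  also have "(\<Sum>i\<in>{..<n} - {j}. poly L (a i)) = 0"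
    unfolding L_def poly_prod by (intro sum.neutral ballI prod_zero) auto
  finally have "poly L (a j) = of_nat n * poly L 0"
    using sum_poly_eq_of_nat_mult_poly_0[OF power_sums \<open>degree L < n\<close>] by simp
  then show ?thesis
    unfolding Q_split pderiv_mult by (simp add: pderiv_pCons)
qed

lemma coeff_euler_operator:
  fixes Q :: "'a::idom poly"
  shows "coeff (pCons 0 (pderiv Q) - smult (of_nat n) Q) k = (of_nat k - of_nat n) * coeff Q k"
  by (cases k) (simp_all add: coeff_pderiv algebra_simps)

lemma binomial_if_euler_constant:
  fixes Q :: "'a::{idom,ring_char_0} poly"
  assumes "0 < n" and "degree Q = n" and "coeff Q n = 1"
    and "degree (pCons 0 (pderiv Q) - smult (of_nat n) Q) = 0"
  shows "poly Q x = x ^ n + coeff Q 0"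
proof -
  have middle: "coeff Q k = 0" if "1 \<le> k" "k \<noteq> n" for k
  proof -
    have "coeff (pCons 0 (pderiv Q) - smult (of_nat n) Q) k = 0"
      using assms(4) that(1) by (intro coeff_eq_0) simp
    then have "(of_nat k - of_nat n) * coeff Q k = (0::'a)"
      by (simp only: coeff_euler_operator)
    then show ?thesis using that(2) by simp
  qed
  have "poly Q x = (\<Sum>k\<in>{0, n}. coeff Q k * x ^ k)"
    unfolding poly_altdef assms(2) using middle by (intro sum.mono_neutral_right) auto
  then show ?thesis using assms(1,3) by (simp add: add.commute)
qed

text \<open>The polynomial X Q' - n Q + n Q(0) has
  degree < n and vanishes at all a j, hence is zero, so Q = X^n + Q(0).\<close>

lemma equal_powers_if_power_sums_vanish:
  fixes a :: "nat \<Rightarrow> 'a::{idom,ring_char_0}"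
  assumes "0 < n" and "inj_on a {..<n}"
    and power_sums: "\<And>k. 1 \<le> k \<Longrightarrow> k < n \<Longrightarrow> (\<Sum>i<n. a i ^ k) = 0"
  shows "\<exists>c. \<forall>j<n. a j ^ n = c"
proof -
  define Q where "Q = (\<Prod>i<n. [:- a i, 1:])"
  define E where "E = pCons 0 (pderiv Q) - smult (of_nat n) Q"
  have deg_Q: "degree Q = n"
    unfolding Q_def by (subst degree_prod_eq_sum_degree) auto
  have monic_Q: "coeff Q n = 1"
    using lead_coeff_prod[of "\<lambda>i. [:- a i, 1:]" "{..<n}"] deg_Q by (simp add: Q_def)
  have roots_Q: "poly Q (a j) = 0" if "j < n" for j
    unfolding Q_def poly_prod using that by (intro prod_zero) auto
  have "degree E \<le> n - 1"
  proof (rule degree_le, intro allI impI)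
    fix k assume "n - 1 < k"
    then consider "k = n" | "degree Q < k" using deg_Q by linarith
    then show "coeff E k = 0"
      unfolding E_def coeff_euler_operator by cases (simp_all add: coeff_eq_0)
  qed
  then have "degree (E + [:of_nat n * poly Q 0:]) < n"
    using \<open>0 < n\<close> by (intro degree_add_less) auto
  moreover have "poly (E + [:of_nat n * poly Q 0:]) (a j) = 0" if "j < n" for j
    using pderiv_prod_linear_at_root[OF power_sums that] roots_Q[OF that]
    by (simp add: E_def Q_def)
  ultimately have "E + [:of_nat n * poly Q 0:] = 0"
    using poly_eq_0_if_many_roots[OF assms(2)] by blast
  then have "degree E = 0"
    by (metis add_eq_0_iff degree_minus degree_pCons_0)
  then have "a j ^ n = - coeff Q 0" if "j < n" for j
    using binomial_if_euler_constant[OF \<open>0 < n\<close> deg_Q monic_Q, of "a j"] roots_Q[OF that]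
    unfolding E_def by (simp add: add_eq_0_iff2)
  then show ?thesis by blast
qed

lemma regular_ngon_if_equal_powers:
  fixes A :: "nat \<Rightarrow> complex"
  assumes "n \<ge> 2" and inj: "inj_on A {..<n}" and powers: "\<forall>j<n. (A j - C) ^ n = c"
  shows "regular_ngon_centred n A C"
proof -
  have "n > 0" using assms(1) by simp
  have "c \<noteq> 0"
  proof
    assume "c = 0"
    then have "A 0 = A 1" using powers assms(1) by auto
    then show False using inj assms(1) unfolding inj_on_def by fastforce
  qed
  define R where "R = root n (norm c)"
  define th where "th = Arg c / real n"
  have "R > 0" using \<open>c \<noteq> 0\<close> \<open>n > 0\<close> by (simp add: R_def)
  have inj_offsets: "inj_on (\<lambda>j. A j - C) {..<n}"
    using inj unfolding inj_on_def by auto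
  have "(\<lambda>j. A j - C) ` {..<n} = {z. z ^ n = c}"
  proof (rule card_subset_eq)
    show "card ((\<lambda>j. A j - C) ` {..<n}) = card {z. z ^ n = c}"
      using card_image[OF inj_offsets] card_nth_roots[OF \<open>c \<noteq> 0\<close> \<open>n > 0\<close>] by simp
  qed (use powers finite_nth_roots[OF \<open>n > 0\<close>] in auto)
  also have "{z. z ^ n = c} = (\<lambda>z. R * cis th * z) ` {z. z ^ n = 1}"
    using bij_betw_imp_surj_on[OF bij_betw_nth_root_unity[OF \<open>c \<noteq> 0\<close> \<open>n > 0\<close>]]
    by (simp add: R_def th_def)
  also have "{z::complex. z ^ n = 1} = (\<lambda>k. cis (2 * pi * real k / real n)) ` {..<n}"
    using bij_betw_imp_surj_on[OF bij_betw_roots_unity[OF \<open>n > 0\<close>]] by simp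
  finally have "(\<lambda>j. A j - C) ` {..<n} = (\<lambda>k. R * cis (th + 2 * pi * real k / real n)) ` {..<n}"
    by (simp add: image_image mult.assoc cis_mult)
  then have "(\<lambda>z. C + z) ` (\<lambda>j. A j - C) ` {..<n}
      = (\<lambda>z. C + z) ` (\<lambda>k. R * cis (th + 2 * pi * real k / real n)) ` {..<n}"
    by (rule arg_cong)
  then have "A ` {..<n} = {C + R * cis (th + 2 * pi * real k / real n) | k. k < n}"
    by (auto simp: image_image)
  then show ?thesis
    unfolding regular_ngon_centred_def using \<open>R > 0\<close> by blast
qed

theorem mainTheorem4:
  fixes n :: nat and A :: "nat \<Rightarrow> complex" and C :: complex
  assumes "n \<ge> 2"
    and "inj_on A {..<n}"
    and "\<forall>r::real. r > 0 \<longrightarrow> (\<exists>c::real. \<forall>P::complex. cmod (P - C) = r \<longrightarrow>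
            (\<Sum>i<n. cmod (P - A i) ^ (2 * n - 2)) = c)"
  shows "regular_ngon_centred n A C"
proof -
  define a where "a i = A i - C" for i
  have inj_a: "inj_on a {..<n}" using assms(2) by (auto simp: inj_on_def a_def)
  have "\<forall>r>0. \<exists>c. \<forall>w. cmod w = r \<longrightarrow> (\<Sum>i<n. cmod (w - a i) ^ (2 * (n - 1))) = c"
  proof (intro allI impI)
    fix r :: real assume "r > 0"
    then obtain c where c: "\<forall>P. cmod (P - C) = r \<longrightarrow> (\<Sum>i<n. cmod (P - A i) ^ (2 * n - 2)) = c"
      using assms(3) by blast
    have "\<forall>w. cmod w = r \<longrightarrow> (\<Sum>i<n. cmod (w - a i) ^ (2 * (n - 1))) = c"
    proof (intro allI impI)
      fix w :: complex assume "cmod w = r"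
      then have "(\<Sum>i<n. cmod ((w + C) - A i) ^ (2 * n - 2)) = c" using c by simp
      then show "(\<Sum>i<n. cmod (w - a i) ^ (2 * (n - 1))) = c"
        by (simp only: a_def diff_diff_eq2 right_diff_distrib' mult_1_right)
    qed
    then show "\<exists>c. \<forall>w. cmod w = r \<longrightarrow> (\<Sum>i<n. cmod (w - a i) ^ (2 * (n - 1))) = c" ..
  qed
  then have "(\<Sum>i<n. a i ^ k) = 0" if "1 \<le> k" "k < n" for k
    using that by (intro power_sums_vanish_if_circle_sums_constant) auto
  then obtain c where "\<forall>j<n. a j ^ n = c"
    using equal_powers_if_power_sums_vanish[OF _ inj_a] assms(1) by fastforce
  then show ?thesis
    using regular_ngon_if_equal_powers[OF assms(1,2)] by (simp add: a_def)
qed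

end
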